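(* Let $n\ge 4$ and let $G$ be a graph on $n$ vertices with non-negative integer weights on its edges. If the total weight of the subgraph of $G$ spanned by any four vertices is at least $3$, then the total weight of $G$ is at least $\left\lceil\tfrac{1}{3}n(n-2)\right\rceil$.
   Context: The total weight of a (sub)graph is the sum of the weights of its edges; the subgraph spanned by a set of vertices consists of those vertices and all edges of $G$ between them. *)

theory Defs
  imports Complex_Main
begin

definition simple_graph :: "'a set \<Rightarrow> 'a set set \<Rightarrow> bool" where
  "simple_graph V E \<longleftrightarrow> finite V \<and> (\<forall>e\<in>E. e \<subseteq> V \<and> card e = 2)"

definition span_weight :: "'a set set \<Rightarrow> ('a set \<Rightarrow> nat) \<Rightarrow> 'a set \<Rightarrow> nat" where
  "span_weight E w S = (\<Sum>e\<in>{e\<in>E. e \<subseteq> S}. w e)"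

definition total_weight :: "'a set set \<Rightarrow> ('a set \<Rightarrow> nat) \<Rightarrow> nat" where
  "total_weight E w = (\<Sum>e\<in>E. w e)"

end

theory Submission
  imports Defs
begin

text \<open>Deleting a vertex v from G and summing over v counts every edge once for each of the
  n - 2 vertices it misses: \<open>(n - 2) W(G) = \<Sum>\<^sub>v W(G - v)\<close>. The 4-vertex condition is
  inherited by the induced subgraphs \<open>G - v\<close>, so by induction on n (the case n = 4 being the
  hypothesis itself) \<open>3 (n - 2) W(G) \<ge> n (n - 1) (n - 3) = n (n - 2)\<^sup>2 - n\<close>. As
  \<open>n (n - 2) = (n - 1)\<^sup>2 - 1\<close> is never 1 modulo 3, a multiple of 3 below \<open>n (n - 2)\<close> is at
  most \<open>n (n - 2) - 2\<close>, which would force \<open>2 (n - 2) \<le> n\<close>; so \<open>3 W(G) \<ge> n (n - 2)\<close>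
  for all n \<ge> 5 as well.\<close>

lemma span_weight_eq_total_weight:
  assumes "\<forall>e\<in>E. e \<subseteq> S"
  shows "span_weight E w S = total_weight E w"
proof -
  have "{e\<in>E. e \<subseteq> S} = E"
    using assms by blast
  then show ?thesis
    unfolding span_weight_def total_weight_def by simp
qed

lemma sum_span_weight_Diff_singleton:
  assumes "finite U" and "\<forall>e\<in>E. card e = k"
  shows "(\<Sum>v\<in>U. span_weight E w (U - {v})) = (card U - k) * span_weight E w U"
proof -
  let ?EU = "{e\<in>E. e \<subseteq> U}"
  have "finite ?EU"
    using \<open>finite U\<close> by (auto intro: finite_subset[of _ "Pow U"])
  have "span_weight E w (U - {v}) = (\<Sum>e\<in>?EU. if v \<notin> e then w e else 0)" for v
    unfolding span_weight_def using \<open>finite ?EU\<close>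
    by (auto simp: sum.inter_filter[symmetric] intro: sum.cong)
  then have "(\<Sum>v\<in>U. span_weight E w (U - {v})) = (\<Sum>e\<in>?EU. \<Sum>v\<in>U. if v \<notin> e then w e else 0)"
    using sum.swap by simp
  also have "\<dots> = (\<Sum>e\<in>?EU. (card U - k) * w e)"
  proof (rule sum.cong[OF refl])
    fix e assume e: "e \<in> ?EU"
    then have "e \<subseteq> U" and "card e = k"
      using assms(2) by auto
    then have "card (U - e) = card U - k"
      using \<open>finite U\<close> by (simp add: card_Diff_subset finite_subset)
    moreover have "(\<Sum>v\<in>U. if v \<notin> e then w e else 0) = card (U - e) * w e"
      using \<open>finite U\<close> by (simp add: sum.inter_filter[symmetric] set_diff_eq)
    ultimately show "(\<Sum>v\<in>U. if v \<notin> e then w e else 0) = (card U - k) * w e"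
      by simp
  qed
  finally show ?thesis
    unfolding span_weight_def by (simp add: sum_distrib_left)
qed

lemma mult_minus_two_mod_3_neq_1:
  fixes n :: int
  shows "n * (n - 2) mod 3 \<noteq> 1"
proof -
  have "n * (n - 2) mod 3 = (n mod 3) * ((n mod 3 - 2) mod 3) mod 3"
    by (simp add: mod_mult_eq mod_diff_left_eq)
  moreover have "n mod 3 \<in> {0, 1, 2}"
    by auto
  ultimately show ?thesis
    by auto
qed

lemma mult_minus_two_le_three_mult:
  fixes n t :: int
  assumes "n \<ge> 5" and "n * (n - 1) * (n - 3) \<le> 3 * t * (n - 2)"
  shows "n * (n - 2) \<le> 3 * t"
proof (rule ccontr)
  assume "\<not> n * (n - 2) \<le> 3 * t"
  with mult_minus_two_mod_3_neq_1[of n] have "3 * t \<le> n * (n - 2) - 2"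
    by presburger
  then have "3 * t * (n - 2) \<le> (n * (n - 2) - 2) * (n - 2)"
    using \<open>n \<ge> 5\<close> by (simp add: mult_right_mono)
  moreover have "n * (n - 1) * (n - 3) = (n * (n - 2) - 2) * (n - 2) - (4 - n)"
    by (simp add: algebra_simps)
  ultimately show False
    using assms by linarith
qed

lemma span_weight_lower_bound:
  assumes "finite V" and "\<forall>e\<in>E. card e = 2"
    and four: "\<forall>S. S \<subseteq> V \<and> card S = 4 \<longrightarrow> span_weight E w S \<ge> 3"
    and "U \<subseteq> V" and "card U \<ge> 4"
  shows "int (card U) * (int (card U) - 2) \<le> 3 * int (span_weight E w U)"
proof -
  have "int m * (int m - 2) \<le> 3 * int (span_weight E w U)"
    if "4 \<le> m" "U \<subseteq> V" "card U = m" for m U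
    using that
  proof (induction m arbitrary: U rule: nat_induct_at_least)
    case base
    then have "span_weight E w U \<ge> 3"
      using four by blast
    then show ?case
      by simp
  next
    case (Suc m)
    have "finite U"
      using Suc.prems \<open>finite V\<close> finite_subset by blast
    have IH: "int m * (int m - 2) \<le> 3 * int (span_weight E w (U - {v}))" if "v \<in> U" for v
      using Suc.IH[of "U - {v}"] Suc.prems that \<open>finite U\<close> by auto
    have "(int m + 1) * (int m * (int m - 2)) = (\<Sum>v\<in>U. int m * (int m - 2))"
      using Suc.prems by simp
    also have "\<dots> \<le> (\<Sum>v\<in>U. 3 * int (span_weight E w (U - {v})))"
      using IH by (rule sum_mono)
    also have "\<dots> = 3 * int (span_weight E w U) * (int m - 1)"
      using sum_span_weight_Diff_singleton[OF \<open>finite U\<close> assms(2), of w] Suc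
      by (simp flip: of_nat_sum sum_distrib_left)
    finally have "(int m + 1) * (int m + 1 - 1) * (int m + 1 - 3)
        \<le> 3 * int (span_weight E w U) * (int m + 1 - 2)"
      by (simp add: algebra_simps)
    then have "(int m + 1) * (int m + 1 - 2) \<le> 3 * int (span_weight E w U)"
      using Suc.hyps by (intro mult_minus_two_le_three_mult) auto
    then show ?case
      using Suc.prems by (simp add: algebra_simps)
  qed
  then show ?thesis
    using assms by blast
qed

theorem theorem1p10:
  fixes V :: "'a set" and E :: "'a set set" and w :: "'a set \<Rightarrow> nat" and n :: nat
  assumes "simple_graph V E"
    and "card V = n"
    and "n \<ge> 4"
    and "\<forall>S. S \<subseteq> V \<and> card S = 4 \<longrightarrow> span_weight E w S \<ge> 3"
  shows "int (total_weight E w) \<ge> ceiling (real n * (real n - 2) / 3)"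
proof -
  have "finite V" and "\<forall>e\<in>E. card e = 2" and "\<forall>e\<in>E. e \<subseteq> V"
    using assms(1) unfolding simple_graph_def by auto
  then have "int n * (int n - 2) \<le> 3 * int (total_weight E w)"
    using span_weight_lower_bound[of V E w V] span_weight_eq_total_weight[of E V w] assms(2-4)
    by simp
  then have "real_of_int (int n * (int n - 2)) \<le> real_of_int (3 * int (total_weight E w))"
    by (simp only: of_int_le_iff)
  then have "real n * (real n - 2) / 3 \<le> real (total_weight E w)"
    by simp
  then show ?thesis
    by (simp add: ceiling_le_iff)
qed

end
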